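(* Let $r>0$ and let $f\in\mathcal S(\mathbb{R}^2)$. Let $g=\mathcal F f$ be its equidistant-detector fan-beam transform with source radius $r$, i.e. for $(s,\beta)\in\mathbb{R}\times\mathbb{R}$, $$g(s,\beta)=\int_0^\infty f\Big(r\theta_\beta+t\,\frac{s\theta_\beta^\perp-r\theta_\beta}{\|s\theta_\beta^\perp-r\theta_\beta\|_2}\Big)\,dt,\qquad \theta_\beta=(\cos\beta,\sin\beta),\ \theta_\beta^\perp=(-\sin\beta,\cos\beta).$$ Let $h^*\in\mathbb{R}$ and define the misaligned sinogram $\tilde g(s,\beta)=g(s-h^*,\beta)$. Define, for $s\in\mathbb{R}$, $$\tilde p(s)=\int_0^{2\pi}\tilde g(s,\beta)\,d\beta,\qquad w(s)=\int_0^{2\pi}\tilde g\Big(-s,\ \beta+\pi+2\arctan\frac{s}{r}\Big)\,d\beta .$$ Then $\tilde p(s)=w(s-2h^* )$ for all $s\in\mathbb{R}$.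
   Context: $\mathcal S(\mathbb{R}^2)$ denotes the Schwartz space of rapidly decreasing functions on $\mathbb{R}^2$. The fan-beam transform $g=\mathcal F f$ gives the integral of $f$ along the ray starting at the source point $r\theta_\beta$ and passing through the detector point $s\theta_\beta^\perp$ (the detector coordinate axis passes through the origin); the angle $\beta$ is the polar angle of the source direction, so $g$ and $\tilde g$ are $2\pi$-periodic in $\beta$. The translation $\tilde g(s,\beta)=g(s-h^*,\beta)$ models a shift of the center of rotation by the (unknown) amount $h^*$ along the detector. *)

theory Defs
  imports "HOL-Analysis.Analysis"
begin

definition dir_deriv :: "(real \<times> real) \<Rightarrow> ((real \<times> real) \<Rightarrow> real) \<Rightarrow> (real \<times> real) \<Rightarrow> real" where
  "dir_deriv v f x = deriv (\<lambda>t. f (x + t *\<^sub>R v)) 0"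

fun iter_partial :: "(real \<times> real) list \<Rightarrow> ((real \<times> real) \<Rightarrow> real) \<Rightarrow> (real \<times> real) \<Rightarrow> real" where
  "iter_partial [] f = f"
| "iter_partial (v # vs) f = dir_deriv v (iter_partial vs f)"

definition coord_dirs :: "(real \<times> real) set" where
  "coord_dirs = {(1,0), (0,1)}"

text \<open>Schwartz space S(R^2): all iterated partial derivatives exist and are
  (Frechet) differentiable everywhere (hence f is C^\<infinity>), and
  x1^m x2^n (\<partial>^\<alpha> f)(x) is bounded for all m, n, \<alpha>.\<close>
definition schwartz :: "((real \<times> real) \<Rightarrow> real) set" where
  "schwartz = {f. \<forall>vs. set vs \<subseteq> coord_dirs \<longrightarrow>
      (\<forall>x. iter_partial vs f differentiable (at x)) \<and>
      (\<forall>m n::nat. \<exists>C. \<forall>x. \<bar>(fst x) ^ m * (snd x) ^ n * iter_partial vs f x\<bar> \<le> C)}"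

definition theta :: "real \<Rightarrow> real \<times> real" where
  "theta b = (cos b, sin b)"

definition theta_perp :: "real \<Rightarrow> real \<times> real" where
  "theta_perp b = (- sin b, cos b)"

definition fanbeam :: "real \<Rightarrow> ((real \<times> real) \<Rightarrow> real) \<Rightarrow> real \<Rightarrow> real \<Rightarrow> real" where
  "fanbeam r f s b = integral {0..} (\<lambda>t. f (r *\<^sub>R theta b +
      t *\<^sub>R ((1 / norm (s *\<^sub>R theta_perp b - r *\<^sub>R theta b)) *\<^sub>R
             (s *\<^sub>R theta_perp b - r *\<^sub>R theta b))))"

end

theory Submission
  imports Defs "HOL-Library.Periodic_Fun" "HOL-Probability.Sinc_Integral"
begin

(* Rotating the source by b rotates the whole ray, so g(u, b) is the integral over t \<ge> 0 of f at
   the rotation by b of a fixed ray point p_u(t). Integrating over a full period in b and swapping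
   the integrals (legitimate by the quadratic decay of f) turns the inner integral into the
   integral of f over the circle of radius |p_u(t)|, whatever the shift of b. The reflection
   u \<mapsto> -u mirrors the fixed ray and leaves |p_u(t)| unchanged, so the integral over b of
   g(-u, b + c) equals that of g(u, b) for every c; with u = s - h* this is the claim. No pointwise
   symmetry of g is used: for rays starting at the source it would fail in general. *)

definition rot :: "real \<Rightarrow> real \<times> real \<Rightarrow> real \<times> real" where
  "rot b p = fst p *\<^sub>R theta b + snd p *\<^sub>R theta_perp b"

lemma rot_add: "rot b (p + q) = rot b p + rot b q"
  by (simp add: rot_def algebra_simps)

lemma rot_scaleR: "rot b (c *\<^sub>R p) = c *\<^sub>R rot b p"
  by (simp add: rot_def algebra_simps)

lemma rot_polar: "rot b (\<rho> * cos a, \<rho> * sin a) = (\<rho> * cos (b + a), \<rho> * sin (b + a))"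
  by (simp add: rot_def theta_def theta_perp_def cos_add sin_add algebra_simps)

lemma norm_rot [simp]: "norm (rot b p) = norm p"
proof (cases p)
  case (Pair x y)
  have "(x * cos b - y * sin b)\<^sup>2 + (x * sin b + y * cos b)\<^sup>2 = (x\<^sup>2 + y\<^sup>2) * ((sin b)\<^sup>2 + (cos b)\<^sup>2)"
    by algebra
  then have "(x * cos b - y * sin b)\<^sup>2 + (x * sin b + y * cos b)\<^sup>2 = x\<^sup>2 + y\<^sup>2"
    by simp
  then show ?thesis
    by (simp add: Pair rot_def theta_def theta_perp_def norm_Pair)
qed

definition ray_dir :: "real \<Rightarrow> real \<Rightarrow> real \<times> real" where
  "ray_dir r u = (1 / norm (- r, u)) *\<^sub>R (- r, u)"

(* The fan-beam ray at source angle 0, from the source (r, 0) towards the detector point (0, u). *)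
definition ray_point :: "real \<Rightarrow> real \<Rightarrow> real \<Rightarrow> real \<times> real" where
  "ray_point r u t = (r, 0) + t *\<^sub>R ray_dir r u"

lemma fanbeam_eq_integral_rot_ray_point:
  "fanbeam r f u b = integral {0..} (\<lambda>t. f (rot b (ray_point r u t)))"
proof -
  have "rot b (ray_point r u t) = rot b (r, 0) + t *\<^sub>R ((1 / norm (rot b (- r, u))) *\<^sub>R rot b (- r, u))" for t
    by (simp only: ray_point_def ray_dir_def rot_add rot_scaleR norm_rot)
  moreover have "rot b (r, 0) = r *\<^sub>R theta b" "rot b (- r, u) = u *\<^sub>R theta_perp b - r *\<^sub>R theta b"
    by (simp_all add: rot_def)
  ultimately show ?thesis
    by (simp add: fanbeam_def)
qed

lemma norm_ray_point_uminus [simp]: "norm (ray_point r (- u) t) = norm (ray_point r u t)"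
  by (simp add: ray_point_def ray_dir_def norm_Pair)

lemma norm_ray_dir: "r \<noteq> 0 \<Longrightarrow> norm (ray_dir r u) = 1"
  unfolding ray_dir_def norm_scaleR by (simp add: zero_prod_def)

lemma abs_diff_norm_le_norm_add_scaleR:
  fixes x e :: "'a :: real_normed_vector"
  assumes "norm e = 1" "t \<ge> 0"
  shows "\<bar>t - norm x\<bar> \<le> norm (x + t *\<^sub>R e)"
  using norm_triangle_ineq3[of "t *\<^sub>R e" "- x"] assms by (simp add: add.commute)

lemma abs_diff_le_norm_ray_point:
  assumes "r > 0" "t \<ge> 0"
  shows "\<bar>t - r\<bar> \<le> norm (ray_point r u t)"
  using abs_diff_norm_le_norm_add_scaleR[OF norm_ray_dir assms(2), where x = "(r, 0)"] assms(1)
  by (simp add: ray_point_def)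

lemma schwartz_differentiable_bounded:
  assumes "f \<in> schwartz"
  shows "\<forall>x. f differentiable (at x)"
    and "\<forall>m n::nat. \<exists>C. \<forall>x. \<bar>fst x ^ m * snd x ^ n * f x\<bar> \<le> C"
proof -
  have "set [] \<subseteq> coord_dirs"
    by simp
  with assms have "(\<forall>x. iter_partial [] f differentiable (at x)) \<and>
      (\<forall>m n::nat. \<exists>C. \<forall>x. \<bar>fst x ^ m * snd x ^ n * iter_partial [] f x\<bar> \<le> C)"
    unfolding schwartz_def by blast
  then show "\<forall>x. f differentiable (at x)" "\<forall>m n::nat. \<exists>C. \<forall>x. \<bar>fst x ^ m * snd x ^ n * f x\<bar> \<le> C"
    by simp_all
qed

lemma schwartz_continuous:
  assumes "f \<in> schwartz"
  shows "continuous_on UNIV f"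
  using schwartz_differentiable_bounded(1)[OF assms]
  by (intro continuous_at_imp_continuous_on ballI differentiable_imp_continuous_within) auto

lemma schwartz_quadratic_decay:
  assumes "f \<in> schwartz"
  obtains K where "\<And>x. \<bar>f x\<bar> \<le> K * inverse (1 + (norm x)\<^sup>2)"
proof -
  note bounded = schwartz_differentiable_bounded(2)[OF assms]
  obtain C0 where C0: "\<And>x. \<bar>fst x ^ 0 * snd x ^ 0 * f x\<bar> \<le> C0" using bounded by blast
  obtain C1 where C1: "\<And>x. \<bar>fst x ^ 2 * snd x ^ 0 * f x\<bar> \<le> C1" using bounded by blast
  obtain C2 where C2: "\<And>x. \<bar>fst x ^ 0 * snd x ^ 2 * f x\<bar> \<le> C2" using bounded by blast
  have "\<bar>f x\<bar> \<le> (C0 + C1 + C2) * inverse (1 + (norm x)\<^sup>2)" for x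
  proof -
    have "\<bar>f x\<bar> * (1 + (norm x)\<^sup>2) = \<bar>f x\<bar> + \<bar>(fst x)\<^sup>2 * f x\<bar> + \<bar>(snd x)\<^sup>2 * f x\<bar>"
      by (cases x) (simp add: norm_Pair abs_mult algebra_simps)
    also have "\<dots> \<le> C0 + C1 + C2"
      using C0[of x] C1[of x] C2[of x] by simp
    finally show ?thesis
      by (simp add: field_simps add_pos_nonneg)
  qed
  then show thesis by (rule that)
qed

lemma integral_periodic_shift:
  fixes h :: "real \<Rightarrow> real"
  assumes cont: "continuous_on UNIV h" and periodic: "\<And>x. h (x + T) = h x" and "T > 0"
  shows "integral {0..T} (\<lambda>x. h (x + c)) = integral {0..T} h"
proof -
  interpret periodic_fun_simple h T
    by standard (rule periodic)
  define c0 where "c0 = frac (c / T) * T"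
  have c0: "0 \<le> c0" "c0 \<le> T"
    using \<open>T > 0\<close> frac_ge_0[of "c / T"] frac_lt_1[of "c / T"] by (simp_all add: c0_def)
  have "c = c0 + of_int \<lfloor>c / T\<rfloor> * T"
    using \<open>T > 0\<close> by (simp add: c0_def frac_def algebra_simps)
  then have shift: "h (x + c) = h (x + c0)" for x
    using plus_of_int[of "x + c0" "\<lfloor>c / T\<rfloor>"] by (simp add: add.assoc)
  have integrable: "h integrable_on {a..b}" for a b
    by (rule integrable_continuous_interval) (rule continuous_on_subset[OF cont], simp)
  have "integral {0..T} (\<lambda>x. h (x + c)) = integral {c0..T + c0} h"
    using integral_shift_real_ivl[of c0 c0 "T + c0" h] by (simp add: shift)
  also have "\<dots> = integral {c0..T} h + integral {T..T + c0} h"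
    using c0 by (intro Henstock_Kurzweil_Integration.integral_combine[symmetric] integrable) auto
  also have "integral {T..T + c0} h = integral {0..c0} h"
    using integral_shift_real_ivl[of T T "T + c0" h] by (simp add: periodic)
  also have "integral {c0..T} h + integral {0..c0} h = integral {0..T} h"
    using c0 by (subst add.commute, intro Henstock_Kurzweil_Integration.integral_combine integrable) auto
  finally show ?thesis .
qed

definition angular_integral :: "(real \<times> real \<Rightarrow> real) \<Rightarrow> real \<Rightarrow> real" where
  "angular_integral f \<rho> = integral {0..2*pi} (\<lambda>b. f (\<rho> * cos b, \<rho> * sin b))"

lemma angular_integral_shift:
  assumes "continuous_on UNIV f"
  shows "integral {0..2*pi} (\<lambda>b. f (\<rho> * cos (b + c), \<rho> * sin (b + c))) = angular_integral f \<rho>"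
  unfolding angular_integral_def
  by (rule integral_periodic_shift[where h = "\<lambda>b. f (\<rho> * cos b, \<rho> * sin b)"])
     (auto intro!: continuous_on_compose2[OF assms] continuous_intros)

lemma angular_integral_abs:
  assumes "continuous_on UNIV f"
  shows "angular_integral f \<bar>\<rho>\<bar> = angular_integral f \<rho>"
proof (cases "\<rho> \<ge> 0")
  case False
  then have "angular_integral f \<bar>\<rho>\<bar> = integral {0..2*pi} (\<lambda>b. f (\<rho> * cos (b + pi), \<rho> * sin (b + pi)))"
    by (simp add: angular_integral_def)
  also have "\<dots> = angular_integral f \<rho>"
    by (rule angular_integral_shift[OF assms])
  finally show ?thesis .
qed simp

lemma integral_rot_shift:
  assumes "continuous_on UNIV f"
  shows "integral {0..2*pi} (\<lambda>b. f (rot (b + c) p)) = angular_integral f (norm p)"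
proof -
  obtain \<rho> a where p: "p = (\<rho> * cos a, \<rho> * sin a)"
    using polar_Ex[of "fst p" "snd p"] by (metis prod.collapse)
  have "p = rot a (\<rho>, 0)"
    by (simp add: p rot_def theta_def)
  then have "norm p = \<bar>\<rho>\<bar>"
    by simp
  have "integral {0..2*pi} (\<lambda>b. f (rot (b + c) p))
      = integral {0..2*pi} (\<lambda>b. f (\<rho> * cos (b + (c + a)), \<rho> * sin (b + (c + a))))"
    by (simp add: p rot_polar add.assoc)
  also have "\<dots> = angular_integral f \<bar>\<rho>\<bar>"
    by (simp add: angular_integral_shift angular_integral_abs assms)
  finally show ?thesis
    using \<open>norm p = \<bar>\<rho>\<bar>\<close> by simp
qed

lemma integrable_indicator_interval_halfline:
  fixes F :: "real \<Rightarrow> real \<Rightarrow> real"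
  assumes cont: "continuous_on UNIV (case_prod F)"
    and bound: "\<And>b t. t \<ge> 0 \<Longrightarrow> \<bar>F b t\<bar> \<le> m t" and m: "integrable lborel m"
  shows "integrable (lborel \<Otimes>\<^sub>M lborel) (\<lambda>(b, t). indicator ({a..c} \<times> {0..}) (b, t) * F b t)"
proof (rule Bochner_Integration.integrable_bound)
  have [measurable]: "m \<in> borel_measurable borel"
    using borel_measurable_integrable[OF m] by simp
  show "integrable (lborel \<Otimes>\<^sub>M lborel) (\<lambda>(b, t). indicator {a..c} b * \<bar>m t\<bar>)"
  proof (rule lborel_pair.Fubini_integrable)
    have "integrable lborel (\<lambda>b. indicator {a..c} b *\<^sub>R (\<integral>t. \<bar>m t\<bar> \<partial>lborel))"
      by (rule borel_integrable_compact) auto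
    then show "integrable lborel (\<lambda>b. \<integral>t. norm (case_prod (\<lambda>b t. indicator {a..c} b * \<bar>m t\<bar>) (b, t)) \<partial>lborel)"
      by (simp add: abs_mult)
  qed (use m in auto)
  have "(\<lambda>(b, t). indicator ({a..c} \<times> {0..}) (b, t) * F b t) = (\<lambda>z. indicator ({a..c} \<times> {0..}) z *\<^sub>R case_prod F z)"
    by auto
  also have "\<dots> \<in> borel_measurable (lborel \<Otimes>\<^sub>M lborel)"
    unfolding lborel_prod measurable_lborel2
    by (rule borel_measurable_continuous_on_indicator[OF _ continuous_on_subset[OF cont]])
       (auto intro: borel_closed closed_Times)
  finally show "(\<lambda>(b, t). indicator ({a..c} \<times> {0..}) (b, t) * F b t) \<in> borel_measurable (lborel \<Otimes>\<^sub>M lborel)" .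
  show "AE z in lborel \<Otimes>\<^sub>M lborel.
      norm ((\<lambda>(b, t). indicator ({a..c} \<times> {0..}) (b, t) * F b t) z) \<le> norm ((\<lambda>(b, t). indicator {a..c} b * \<bar>m t\<bar>) z)"
    by (intro AE_I2) (auto split: split_indicator intro: order_trans[OF bound abs_ge_self])
qed

lemma Fubini_interval_halfline:
  fixes F :: "real \<Rightarrow> real \<Rightarrow> real"
  assumes cont: "continuous_on UNIV (case_prod F)"
    and bound: "\<And>b t. t \<ge> 0 \<Longrightarrow> \<bar>F b t\<bar> \<le> m t" and m: "integrable lborel m"
  shows "integral {a..c} (\<lambda>b. integral {0..} (F b)) = (LINT t:{0..}|lborel. integral {a..c} (\<lambda>b. F b t))"
proof -
  define G where "G b t = indicator ({a..c} \<times> {0..}) (b, t) * F b t" for b t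
  have G: "integrable (lborel \<Otimes>\<^sub>M lborel) (case_prod G)"
    unfolding G_def by (rule integrable_indicator_interval_halfline[OF cont bound m])
  have "continuous_on UNIV (\<lambda>t. case_prod F (b, t))" for b
    by (intro continuous_on_compose2[OF cont] continuous_intros) auto
  then have cont_t: "continuous_on UNIV (F b)" for b
    by simp
  have "continuous_on UNIV (\<lambda>b. case_prod F (b, t))" for t
    by (intro continuous_on_compose2[OF cont] continuous_intros) auto
  then have cont_b: "continuous_on UNIV (\<lambda>b. F b t)" for t
    by simp
  have int_t: "set_integrable lborel {0..} (F b)" for b
    unfolding set_integrable_def
  proof (rule Bochner_Integration.integrable_bound[OF integrable_abs[OF m]])
    show "(\<lambda>t. indicator {0..} t *\<^sub>R F b t) \<in> borel_measurable lborel"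
      unfolding measurable_lborel2
      by (rule borel_measurable_continuous_on_indicator[OF _ continuous_on_subset[OF cont_t]]) auto
    show "AE t in lborel. norm (indicator {0..} t *\<^sub>R F b t) \<le> norm \<bar>m t\<bar>"
      by (intro AE_I2) (auto split: split_indicator intro: order_trans[OF bound abs_ge_self])
  qed
  have inner_t: "(\<integral>t. G b t \<partial>lborel) = indicator {a..c} b * integral {0..} (F b)" for b
  proof -
    have "(\<integral>t. G b t \<partial>lborel) = indicator {a..c} b * (LINT t:{0..}|lborel. F b t)"
      by (simp add: G_def indicator_times set_lebesgue_integral_def mult.assoc)
    then show ?thesis
      by (simp add: set_borel_integral_eq_integral(2)[OF int_t])
  qed
  have int_b: "set_integrable lborel {a..c} (\<lambda>b. F b t)" for t
    unfolding set_integrable_def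
    by (rule borel_integrable_compact) (auto intro: continuous_on_subset[OF cont_b])
  have inner_b: "(\<integral>b. G b t \<partial>lborel) = indicator {0..} t * integral {a..c} (\<lambda>b. F b t)" for t
  proof -
    have "(\<lambda>b. G b t) = (\<lambda>b. indicator {0..} t * (indicator {a..c} b * F b t))"
      by (simp add: G_def indicator_times fun_eq_iff mult_ac)
    then have "(\<integral>b. G b t \<partial>lborel) = indicator {0..} t * (LINT b:{a..c}|lborel. F b t)"
      by (simp add: set_lebesgue_integral_def)
    then show ?thesis
      by (simp add: set_borel_integral_eq_integral(2)[OF int_b])
  qed
  have "set_integrable lborel {a..c} (\<lambda>b. integral {0..} (F b))"
    using lborel_pair.integrable_fst[OF G] by (simp add: inner_t set_integrable_def)
  then have "integral {a..c} (\<lambda>b. integral {0..} (F b)) = (LINT b:{a..c}|lborel. integral {0..} (F b))"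
    by (simp add: set_borel_integral_eq_integral(2))
  also have "\<dots> = (\<integral>b. \<integral>t. G b t \<partial>lborel \<partial>lborel)"
    by (simp add: inner_t set_lebesgue_integral_def)
  also have "\<dots> = (\<integral>t. \<integral>b. G b t \<partial>lborel \<partial>lborel)"
    using lborel_pair.Fubini_integral[OF G] by simp
  also have "\<dots> = (LINT t:{0..}|lborel. integral {a..c} (\<lambda>b. F b t))"
    by (simp add: inner_b set_lebesgue_integral_def)
  finally show ?thesis .
qed

lemma integral_fanbeam_shift:
  fixes f :: "real \<times> real \<Rightarrow> real"
  assumes "r > 0" and cont: "continuous_on UNIV f"
    and decay: "\<And>x. \<bar>f x\<bar> \<le> K * inverse (1 + (norm x)\<^sup>2)"
  shows "integral {0..2*pi} (\<lambda>b. fanbeam r f u (b + c))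
       = (LINT t:{0..}|lborel. angular_integral f (norm (ray_point r u t)))"
proof -
  have "K \<ge> 0"
    using decay[of 0] abs_ge_zero[of "f 0"] by simp
  have ray_decay: "\<bar>f (rot (b + c) (ray_point r u t))\<bar> \<le> K * inverse (1 + (t - r)\<^sup>2)" if "t \<ge> 0" for b t
  proof -
    have "(t - r)\<^sup>2 \<le> (norm (rot (b + c) (ray_point r u t)))\<^sup>2"
      using abs_diff_le_norm_ray_point[OF \<open>r > 0\<close> that, of u] by (metis abs_le_square_iff abs_norm_cancel norm_rot)
    then have "inverse (1 + (norm (rot (b + c) (ray_point r u t)))\<^sup>2) \<le> inverse (1 + (t - r)\<^sup>2)"
      by (intro le_imp_inverse_le) (auto intro: add_pos_nonneg)
    then show ?thesis
      using decay mult_left_mono[OF _ \<open>K \<ge> 0\<close>] order_trans by blast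
  qed
  have "integrable lborel (\<lambda>t::real. inverse (1 + t\<^sup>2))"
    using integrable_inverse_1_plus_square by (simp add: set_integrable_def)
  then have "integrable lborel (\<lambda>t. inverse (1 + (- r + 1 * t)\<^sup>2))"
    by (rule lborel_integrable_real_affine) simp
  then have majorant: "integrable lborel (\<lambda>t. K * inverse (1 + (t - r)\<^sup>2))"
    by simp
  have "continuous_on UNIV (\<lambda>z. f (rot (fst z + c) (ray_point r u (snd z))))"
    unfolding rot_def ray_point_def theta_def theta_perp_def
    by (rule continuous_on_compose2[OF cont]) (auto intro!: continuous_intros)
  then have joint_cont: "continuous_on UNIV (\<lambda>(b, t). f (rot (b + c) (ray_point r u t)))"
    by (simp add: case_prod_unfold)
  have "integral {0..2*pi} (\<lambda>b. fanbeam r f u (b + c))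
      = integral {0..2*pi} (\<lambda>b. integral {0..} (\<lambda>t. f (rot (b + c) (ray_point r u t))))"
    by (simp add: fanbeam_eq_integral_rot_ray_point)
  also have "\<dots> = (LINT t:{0..}|lborel. integral {0..2*pi} (\<lambda>b. f (rot (b + c) (ray_point r u t))))"
    by (rule Fubini_interval_halfline[OF joint_cont ray_decay majorant])
  also have "\<dots> = (LINT t:{0..}|lborel. angular_integral f (norm (ray_point r u t)))"
    by (simp add: integral_rot_shift cont)
  finally show ?thesis .
qed

lemma integral_fanbeam_uminus_shift:
  fixes f :: "real \<times> real \<Rightarrow> real"
  assumes "r > 0" and "continuous_on UNIV f"
    and "\<And>x. \<bar>f x\<bar> \<le> K * inverse (1 + (norm x)\<^sup>2)"
  shows "integral {0..2*pi} (\<lambda>b. fanbeam r f (- u) (b + c)) = integral {0..2*pi} (fanbeam r f u)"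
  using integral_fanbeam_shift[OF assms, of "- u" c] integral_fanbeam_shift[OF assms, of u 0] by simp

theorem proposition1:
  fixes r h :: real and f :: "real \<times> real \<Rightarrow> real"
  assumes "r > 0" and "f \<in> schwartz"
  shows "let g = fanbeam r f;
             gt = (\<lambda>s b. g (s - h) b);
             pt = (\<lambda>s. integral {0..2*pi} (\<lambda>b. gt s b));
             w = (\<lambda>s. integral {0..2*pi} (\<lambda>b. gt (- s) (b + pi + 2 * arctan (s / r))))
         in \<forall>s. pt s = w (s - 2 * h)"
proof -
  obtain K where decay: "\<And>x. \<bar>f x\<bar> \<le> K * inverse (1 + (norm x)\<^sup>2)"
    using schwartz_quadratic_decay[OF assms(2)] by blast
  note uminus_shift = integral_fanbeam_uminus_shift[OF assms(1) schwartz_continuous[OF assms(2)] decay]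
  have "integral {0..2*pi} (fanbeam r f (s - h))
      = integral {0..2*pi} (\<lambda>b. fanbeam r f (- (s - 2 * h) - h) (b + pi + 2 * arctan ((s - 2 * h) / r)))"
    for s
  proof -
    have "- (s - 2 * h) - h = - (s - h)"
      by simp
    then show ?thesis
      using uminus_shift[of "s - h" "pi + 2 * arctan ((s - 2 * h) / r)"] by (simp add: add.assoc)
  qed
  then show ?thesis
    by (simp add: Let_def)
qed

end
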